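(* Let $H$ be a complex Hilbert space and let $T$ be a densely defined closed linear operator in $H$ with domain $D(T)$ such that $D(T)\subset D(T^* )$. Suppose $T$ is nilpotent, i.e. there is $n\in\mathbb{N}$ such that $T^n$ is well defined with $D(T^n)=D(T)$ and $T^n x=0$ for all $x\in D(T)$. Then $T\in B(H)$ (i.e. $D(T)=H$ and $T$ is bounded). In particular, if $T$ is a closed densely defined nilpotent operator which is symmetric or hyponormal, then $T=0$ everywhere on $H$.
   Context: Products of unbounded operators are taken on natural domains: $D(ST)=\{x\in D(T): Tx\in D(S)\}$, and $T^n$ is defined accordingly. Nilpotence of $T$ means $D(T^n)=D(T^{n-1})=\dots=D(T)$ and $T^n=0$ on $D(T)$. A densely defined $T$ is symmetric if $T\subset T^*$ (i.e. $D(T)\subset D(T^* )$ and $T^*=T$ on $D(T)$). A densely defined $T$ is hyponormal if $D(T)\subset D(T^* )$ and $\|T^*x\|\leq\|Tx\|$ for all $x\in D(T)$. $B(H)$ is the algebra of everywhere defined bounded operators on $H$. *)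

theory Defs
  imports "HOL-Analysis.Analysis"
begin

text \<open>The distribution has no complex inner product spaces, so we introduce them as type
classes (following the usual axioms; the inner product is conjugate-linear in the first
argument and linear in the second).\<close>

class complex_vector = real_vector +
  fixes scaleC :: "complex \<Rightarrow> 'a \<Rightarrow> 'a"
  assumes scaleC_add_right: "scaleC a (x + y) = scaleC a x + scaleC a y"
    and scaleC_add_left: "scaleC (a + b) x = scaleC a x + scaleC b x"
    and scaleC_scaleC: "scaleC a (scaleC b x) = scaleC (a * b) x"
    and scaleC_one: "scaleC 1 x = x"
    and scaleR_scaleC: "scaleR r x = scaleC (complex_of_real r) x"

class complex_inner = complex_vector + real_normed_vector +
  fixes cinner :: "'a \<Rightarrow> 'a \<Rightarrow> complex"
  assumes cinner_commute: "cinner x y = cnj (cinner y x)"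
    and cinner_add_left: "cinner (x + y) z = cinner x z + cinner y z"
    and cinner_scaleC_left: "cinner (scaleC r x) y = cnj r * cinner x y"
    and cinner_self_real: "Im (cinner x x) = 0"
    and cinner_self_nonneg: "0 \<le> Re (cinner x x)"
    and cinner_self_eq_zero: "cinner x x = 0 \<longleftrightarrow> x = 0"
    and norm_eq_sqrt_cinner: "norm x = sqrt (Re (cinner x x))"

class chilbert_space = complex_inner + complete_space

text \<open>An operator in H is a pair (D, T): a domain D and a function T, only meaningful on D.\<close>

definition csubspace :: "'a::complex_vector set \<Rightarrow> bool" where
  "csubspace S \<longleftrightarrow> 0 \<in> S \<and> (\<forall>x\<in>S. \<forall>y\<in>S. x + y \<in> S) \<and> (\<forall>c. \<forall>x\<in>S. scaleC c x \<in> S)"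

definition linear_op :: "'a::complex_vector set \<Rightarrow> ('a \<Rightarrow> 'a) \<Rightarrow> bool" where
  "linear_op D T \<longleftrightarrow> csubspace D \<and> (\<forall>x\<in>D. \<forall>y\<in>D. T (x + y) = T x + T y)
     \<and> (\<forall>c. \<forall>x\<in>D. T (scaleC c x) = scaleC c (T x))"

definition densely_defined :: "'a::complex_inner set \<Rightarrow> bool" where
  "densely_defined D \<longleftrightarrow> closure D = UNIV"

definition closed_op :: "'a::complex_inner set \<Rightarrow> ('a \<Rightarrow> 'a) \<Rightarrow> bool" where
  "closed_op D T \<longleftrightarrow> closed {(x, T x) | x. x \<in> D}"

definition adj_dom :: "'a::complex_inner set \<Rightarrow> ('a \<Rightarrow> 'a) \<Rightarrow> 'a set" where
  "adj_dom D T = {y. \<exists>z. \<forall>x\<in>D. cinner (T x) y = cinner x z}"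

definition adj :: "'a::complex_inner set \<Rightarrow> ('a \<Rightarrow> 'a) \<Rightarrow> 'a \<Rightarrow> 'a" where
  "adj D T y = (THE z. \<forall>x\<in>D. cinner (T x) y = cinner x z)"

fun pow_dom :: "'a set \<Rightarrow> ('a \<Rightarrow> 'a) \<Rightarrow> nat \<Rightarrow> 'a set" where
  "pow_dom D T 0 = UNIV"
| "pow_dom D T (Suc k) = {x \<in> D. T x \<in> pow_dom D T k}"

definition nilpotent_op :: "'a::complex_vector set \<Rightarrow> ('a \<Rightarrow> 'a) \<Rightarrow> bool" where
  "nilpotent_op D T \<longleftrightarrow> (\<exists>n. pow_dom D T n = D \<and> (\<forall>x\<in>D. (T ^^ n) x = 0))"

definition symmetric_op :: "'a::complex_inner set \<Rightarrow> ('a \<Rightarrow> 'a) \<Rightarrow> bool" where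
  "symmetric_op D T \<longleftrightarrow> densely_defined D \<and> D \<subseteq> adj_dom D T \<and> (\<forall>x\<in>D. adj D T x = T x)"

definition hyponormal_op :: "'a::complex_inner set \<Rightarrow> ('a \<Rightarrow> 'a) \<Rightarrow> bool" where
  "hyponormal_op D T \<longleftrightarrow> densely_defined D \<and> D \<subseteq> adj_dom D T
     \<and> (\<forall>x\<in>D. norm (adj D T x) \<le> norm (T x))"

end

theory Submission
  imports Defs
begin

text \<open>Nilpotence of \<open>T\<close> gives \<open>T D(T) \<subseteq> D(T)\<close>, so together with \<open>D(T) \<subseteq> D(T\<^sup>*)\<close>
the operator \<open>T\<^sup>* T\<close> is defined on all of \<open>D(T)\<close>. As \<open>T\<^sup>*\<close> is closed, the map
\<open>(x, T x) \<mapsto> T\<^sup>* T x\<close> on the graph of \<open>T\<close> (a Banach space, \<open>T\<close> being closed) has closed graph,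
so it is bounded by the closed graph theorem. Then
\<open>\<parallel>T x\<parallel>\<^sup>2 = Re \<langle>x, T\<^sup>* T x\<rangle> \<le> C \<parallel>x\<parallel> (\<parallel>x\<parallel> + \<parallel>T x\<parallel>)\<close>, which bounds \<open>\<parallel>T x\<parallel>\<close> by a multiple of \<open>\<parallel>x\<parallel>\<close>.
A bounded closed operator has closed domain, and a dense closed domain is everything.
If moreover \<open>\<parallel>T\<^sup>* x\<parallel> \<le> \<parallel>T x\<parallel>\<close>, then \<open>T v = 0\<close> implies \<open>T\<^sup>* v = 0\<close>; for \<open>v = T w\<close> this gives
\<open>\<parallel>v\<parallel>\<^sup>2 = \<langle>w, T\<^sup>* v\<rangle> = 0\<close>, so \<open>T\<^sup>n = 0\<close> descends to \<open>T = 0\<close>.\<close>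

instance chilbert_space \<subseteq> banach ..

section \<open>Complex inner products and the adjoint\<close>

lemma cinner_add_right: "cinner (x::'a::complex_inner) (y + z) = cinner x y + cinner x z"
  by (metis cinner_add_left cinner_commute complex_cnj_add)

lemma cinner_scaleC_right: "cinner (x::'a::complex_inner) (scaleC c y) = c * cinner x y"
  by (metis cinner_scaleC_left cinner_commute complex_cnj_cnj complex_cnj_mult)

lemma cinner_scaleR_left: "cinner (r *\<^sub>R (x::'a::complex_inner)) y = of_real r * cinner x y"
  by (simp add: scaleR_scaleC cinner_scaleC_left)

lemma cinner_scaleR_right: "cinner (x::'a::complex_inner) (r *\<^sub>R y) = of_real r * cinner x y"
  by (simp add: scaleR_scaleC cinner_scaleC_right)

lemma cinner_minus_right: "cinner (x::'a::complex_inner) (- y) = - cinner x y"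
  using cinner_scaleR_right[of x "-1" y] by simp

lemma cinner_diff_right: "cinner (x::'a::complex_inner) (y - z) = cinner x y - cinner x z"
  by (simp only: diff_conv_add_uminus cinner_add_right cinner_minus_right)

lemma cinner_zero_right [simp]: "cinner (x::'a::complex_inner) 0 = 0"
  using cinner_scaleR_right[of x 0 0] by simp

lemma power2_norm_eq_cinner: "(norm (x::'a::complex_inner))\<^sup>2 = Re (cinner x x)"
  by (simp add: norm_eq_sqrt_cinner cinner_self_nonneg)

lemma Re_cinner_commute: "Re (cinner (x::'a::complex_inner) y) = Re (cinner y x)"
  by (metis cinner_commute complex_cnj_cnj cnj.sel(1))

lemma abs_Re_cinner_le_norm: "\<bar>Re (cinner (x::'a::complex_inner) y)\<bar> \<le> norm x * norm y"
proof (cases "y = 0")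
  case False
  define R where "R = Re (cinner x y)"
  define N where "N = (norm y)\<^sup>2"
  have N: "N > 0" using False by (simp add: N_def)
  define l where "l = - R / N"
  \<comment> \<open>the minimum of the quadratic \<open>t \<mapsto> norm (x + t *\<^sub>R y)\<^sup>2\<close>\<close>
  have "0 \<le> Re (cinner (x + l *\<^sub>R y) (x + l *\<^sub>R y))"
    by (rule cinner_self_nonneg)
  also have "\<dots> = (norm x)\<^sup>2 + 2 * l * R + l\<^sup>2 * N"
    by (simp add: cinner_add_left cinner_add_right cinner_scaleR_left cinner_scaleR_right
        power2_norm_eq_cinner[of x, symmetric] power2_norm_eq_cinner[of y, symmetric]
        R_def N_def Re_cinner_commute[of y x] power2_eq_square algebra_simps)
  also have "\<dots> = (norm x)\<^sup>2 - R\<^sup>2 / N"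
    using N by (simp add: l_def field_simps power2_eq_square)
  finally have "\<bar>R\<bar>\<^sup>2 \<le> (norm x * norm y)\<^sup>2"
    using N by (simp add: N_def field_simps power_mult_distrib)
  then show ?thesis
    unfolding R_def by (meson abs_ge_zero mult_nonneg_nonneg norm_ge_zero power2_le_imp_le)
qed simp

lemma bounded_linear_Re_cinner_right: "bounded_linear (\<lambda>y. Re (cinner (x::'a::complex_inner) y))"
proof (rule bounded_linear_intro[where K="norm x"])
  show "norm (Re (cinner x y)) \<le> norm y * norm x" for y
    using abs_Re_cinner_le_norm[of x y] by (simp add: mult.commute)
qed (auto simp: cinner_add_right cinner_scaleR_right)

lemma bounded_linear_Re_cinner_left: "bounded_linear (\<lambda>x. Re (cinner x (y::'a::complex_inner)))"
  by (rule bounded_linear_intro[where K="norm y"])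
    (auto simp: cinner_add_left cinner_scaleR_left abs_Re_cinner_le_norm)

lemma eq_0_if_Re_cinner_dense:
  fixes w :: "'a::complex_inner"
  assumes "densely_defined D" and "\<And>u. u \<in> D \<Longrightarrow> Re (cinner u w) = 0"
  shows "w = 0"
proof -
  have "closed {x. Re (cinner x w) = 0}"
    using bounded_linear.continuous_on[OF bounded_linear_Re_cinner_left continuous_on_id]
    by (intro closed_Collect_eq) auto
  then have "closure D \<subseteq> {x. Re (cinner x w) = 0}"
    using assms(2) by (intro closure_minimal) auto
  then have "Re (cinner w w) = 0"
    using assms(1) by (auto simp: densely_defined_def)
  then show ?thesis
    using power2_norm_eq_cinner[of w] by simp
qed

lemma cinner_adj:
  fixes D :: "'a::complex_inner set"
  assumes "densely_defined D" and "y \<in> adj_dom D T" and "x \<in> D"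
  shows "cinner (T x) y = cinner x (adj D T y)"
proof -
  obtain z where z: "\<forall>x\<in>D. cinner (T x) y = cinner x z"
    using assms(2) by (auto simp: adj_dom_def)
  have "z' = z" if "\<forall>x\<in>D. cinner (T x) y = cinner x z'" for z'
    using eq_0_if_Re_cinner_dense[OF assms(1), of "z' - z"] that z by (simp add: cinner_diff_right)
  then have "\<forall>x\<in>D. cinner (T x) y = cinner x (adj D T y)"
    unfolding adj_def by (rule theI[where P="\<lambda>z. \<forall>x\<in>D. cinner (T x) y = cinner x z", OF z])
  then show ?thesis
    using assms(3) by blast
qed

lemma adj_eqI:
  fixes D :: "'a::complex_inner set"
  assumes "densely_defined D" and "y \<in> adj_dom D T"
    and "\<And>x. x \<in> D \<Longrightarrow> Re (cinner (T x) y) = Re (cinner x z)"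
  shows "adj D T y = z"
  using eq_0_if_Re_cinner_dense[OF assms(1), of "z - adj D T y"] assms
  by (simp add: cinner_diff_right cinner_adj)

lemma adj_dom_add: "y \<in> adj_dom D T \<Longrightarrow> y' \<in> adj_dom D T \<Longrightarrow> y + y' \<in> adj_dom D T"
  unfolding adj_dom_def by (auto simp: cinner_add_right intro: exI[of _ "_ + _"])

lemma adj_dom_scaleR: "y \<in> adj_dom D T \<Longrightarrow> r *\<^sub>R y \<in> adj_dom D T"
  unfolding adj_dom_def by (auto simp: cinner_scaleR_right intro: exI[of _ "r *\<^sub>R _"])

lemma adj_add:
  assumes "densely_defined D" and "y \<in> adj_dom D T" and "y' \<in> adj_dom D T"
  shows "adj D T (y + y') = adj D T y + adj D T y'"
  using assms by (intro adj_eqI adj_dom_add) (auto simp: cinner_add_right cinner_adj)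

lemma adj_scaleR:
  assumes "densely_defined D" and "y \<in> adj_dom D T"
  shows "adj D T (r *\<^sub>R y) = r *\<^sub>R adj D T y"
  using assms by (intro adj_eqI adj_dom_scaleR) (auto simp: cinner_scaleR_right cinner_adj)

lemma adj_eq_lim:
  fixes D :: "'a::complex_inner set"
  assumes "densely_defined D" and "\<And>j. ys j \<in> adj_dom D T" and "y \<in> adj_dom D T"
    and "ys \<longlonglongrightarrow> y" and "(\<lambda>j. adj D T (ys j)) \<longlonglongrightarrow> z"
  shows "adj D T y = z"
proof (rule adj_eqI[OF assms(1,3)])
  fix x assume x: "x \<in> D"
  have "(\<lambda>j. Re (cinner (T x) (ys j))) \<longlonglongrightarrow> Re (cinner (T x) y)"
    by (rule bounded_linear.tendsto[OF bounded_linear_Re_cinner_right assms(4)])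
  moreover have "(\<lambda>j. Re (cinner (T x) (ys j))) \<longlonglongrightarrow> Re (cinner x z)"
    using bounded_linear.tendsto[OF bounded_linear_Re_cinner_right assms(5)]
    by (simp add: cinner_adj[OF assms(1,2) x])
  ultimately show "Re (cinner (T x) y) = Re (cinner x z)"
    by (rule LIMSEQ_unique)
qed

section \<open>The closed graph theorem on a closed subspace\<close>

lemma Baire_sublevel_closure_contains_ball:
  fixes S :: "'a::complete_space set" and g :: "'a \<Rightarrow> real"
  assumes "closed S" and "S \<noteq> {}"
  shows "\<exists>k x0 r. x0 \<in> S \<and> r > 0 \<and> S \<inter> ball x0 r \<subseteq> closure {x \<in> S. g x \<le> real k}"
proof -
  define A where "A k = closure {x \<in> S. g x \<le> real k}" for k :: nat
  have A_sub: "A k \<subseteq> S" for k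
    unfolding A_def using assms(1) by (rule closure_minimal[rotated]) auto
  have A_closedin: "closedin (top_of_set S) (A k)" for k
    unfolding A_def by (rule closed_subset[OF A_sub[unfolded A_def] closed_closure])
  have "S \<subseteq> \<Union>(range A)"
  proof
    fix x assume "x \<in> S"
    then have "x \<in> {y \<in> S. g y \<le> real (nat \<lceil>g x\<rceil>)}"
      using real_nat_ceiling_ge[of "g x"] by simp
    then have "x \<in> A (nat \<lceil>g x\<rceil>)"
      unfolding A_def by (rule subsetD[OF closure_subset])
    then show "x \<in> \<Union>(range A)" by blast
  qed
  then have "\<Union>(range A) = S"
    using A_sub by blast
  have "\<exists>k. top_of_set S interior_of A k \<noteq> {}"
  proof (rule ccontr)
    assume no_interior: "\<not> ?thesis"
    have "top_of_set S interior_of \<Union>(range A) = {}"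
    proof (rule Baire_category_alt)
      show "completely_metrizable_space (top_of_set S) \<or>
          locally_compact_space (top_of_set S) \<and> regular_space (top_of_set S)"
        using completely_metrizable_space_closedin[OF completely_metrizable_space_euclidean
            assms(1)[unfolded closed_closedin]] ..
      show "countable (range A)"
        by simp
      show "closedin (top_of_set S) T \<and> top_of_set S interior_of T = {}" if "T \<in> range A" for T
        using that A_closedin no_interior by auto
    qed
    then show False
      using \<open>\<Union>(range A) = S\<close> assms(2) interior_of_topspace[of "top_of_set S"] by simp
  qed
  then obtain k x0 where "x0 \<in> top_of_set S interior_of A k"
    by blast
  then obtain U where "openin (top_of_set S) U" "x0 \<in> U" "U \<subseteq> A k"
    by (auto simp: interior_of_def)
  then obtain V where "open V" "U = S \<inter> V"
    by (auto simp: openin_open)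
  then have "x0 \<in> S" "x0 \<in> V"
    using \<open>x0 \<in> U\<close> by auto
  obtain r where "r > 0" "ball x0 r \<subseteq> V"
    using \<open>open V\<close> \<open>x0 \<in> V\<close> open_contains_ball by blast
  then have "S \<inter> ball x0 r \<subseteq> A k"
    using \<open>U = S \<inter> V\<close> \<open>U \<subseteq> A k\<close> by blast
  then show ?thesis
    using \<open>x0 \<in> S\<close> \<open>r > 0\<close> unfolding A_def by blast
qed

locale linear_on_closed_subspace =
  fixes S :: "'a::banach set" and f :: "'a \<Rightarrow> 'b::banach"
  assumes closed: "closed S" and subspace: "subspace S"
    and add: "\<And>x y. x \<in> S \<Longrightarrow> y \<in> S \<Longrightarrow> f (x + y) = f x + f y"
    and scaleR: "\<And>r x. x \<in> S \<Longrightarrow> f (r *\<^sub>R x) = r *\<^sub>R f x"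
begin

lemma zero [simp]: "f 0 = 0"
  using scaleR[OF subspace_0[OF subspace], of 0] by simp

lemma diff: "x \<in> S \<Longrightarrow> y \<in> S \<Longrightarrow> f (x - y) = f x - f y"
  using add[of x "(-1) *\<^sub>R y"] scaleR[of y "-1"] subspace_scale[OF subspace, of y "-1"] by simp

lemma sum: "(\<And>j. j \<in> J \<Longrightarrow> a j \<in> S) \<Longrightarrow> f (\<Sum>j\<in>J. a j) = (\<Sum>j\<in>J. f (a j))"
  by (induction J rule: infinite_finite_induct) (auto simp: add subspace_sum[OF subspace])

text \<open>The approximants are differences of points of the sublevel set near \<open>x0 + z\<close> and near \<open>x0\<close>.\<close>
lemma approx_near_origin:
  assumes ball: "x0 \<in> S" "r > 0" "S \<inter> ball x0 r \<subseteq> closure {x \<in> S. norm (f x) \<le> k}"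
    and z: "z \<in> S" "norm z < r" and "e > 0"
  shows "\<exists>a\<in>S. norm (f a) \<le> 2 * k \<and> norm (z - a) < e"
proof -
  have "x0 + z \<in> closure {x \<in> S. norm (f x) \<le> k}" "x0 \<in> closure {x \<in> S. norm (f x) \<le> k}"
    using ball z subspace_add[OF subspace] by (auto simp: dist_norm)
  then obtain a b where a: "a \<in> S" "norm (f a) \<le> k" "dist a (x0 + z) < e / 2"
    and b: "b \<in> S" "norm (f b) \<le> k" "dist b x0 < e / 2"
    using \<open>e > 0\<close> unfolding closure_approachable
    by (metis (no_types, lifting) half_gt_zero mem_Collect_eq)
  have "norm (f (a - b)) \<le> norm (f a) + norm (f b)"
    unfolding diff[OF a(1) b(1)] by (rule norm_triangle_ineq4)
  moreover have "z - (a - b) = ((x0 + z) - a) + (b - x0)"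
    by (simp add: algebra_simps)
  then have "norm (z - (a - b)) \<le> norm ((x0 + z) - a) + norm (b - x0)"
    by (metis norm_triangle_ineq)
  ultimately show ?thesis
    using a b subspace_diff[OF subspace a(1) b(1)]
    by (intro bexI[of _ "a - b"]) (auto simp: dist_norm norm_minus_commute)
qed

lemma approx_with_bounded_image:
  "\<exists>M\<ge>0. \<forall>z\<in>S. \<forall>e>0. \<exists>a\<in>S. norm (f a) \<le> M * norm z \<and> norm (z - a) < e"
proof -
  obtain k x0 r where ball: "x0 \<in> S" "r > 0" "S \<inter> ball x0 r \<subseteq> closure {x \<in> S. norm (f x) \<le> real k}"
    using Baire_sublevel_closure_contains_ball[OF closed, of "\<lambda>x. norm (f x)"]
      subspace_0[OF subspace] by blast
  define M where "M = 4 * real k / r"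
  have "\<exists>a\<in>S. norm (f a) \<le> M * norm z \<and> norm (z - a) < e" if z: "z \<in> S" and "e > 0" for z e
  proof (cases "z = 0")
    case True
    then show ?thesis
      using \<open>e > 0\<close> subspace_0[OF subspace] by (intro bexI[of _ 0]) auto
  next
    case False
    define t where "t = r / (2 * norm z)"
    have t: "t > 0" "norm (t *\<^sub>R z) < r"
      using False \<open>r > 0\<close> by (auto simp: t_def)
    obtain a where a: "a \<in> S" "norm (f a) \<le> 2 * real k" "norm (t *\<^sub>R z - a) < e * t"
      using approx_near_origin[OF ball subspace_scale[OF subspace z] t(2)] \<open>e > 0\<close> t(1)
      by (meson mult_pos_pos)
    have "norm (f ((1 / t) *\<^sub>R a)) = norm (f a) / t"
      using scaleR[OF a(1)] t(1) by simp
    also have "\<dots> \<le> M * norm z"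
      using a(2) t(1) False \<open>r > 0\<close> by (simp add: t_def M_def field_simps)
    finally have "norm (f ((1 / t) *\<^sub>R a)) \<le> M * norm z" .
    moreover have "z - (1 / t) *\<^sub>R a = (1 / t) *\<^sub>R (t *\<^sub>R z - a)"
      using t(1) by (simp add: algebra_simps)
    then have "norm (z - (1 / t) *\<^sub>R a) = norm (t *\<^sub>R z - a) / t"
      using t(1) by simp
    then have "norm (z - (1 / t) *\<^sub>R a) < e"
      using a(3) t(1) by (simp add: pos_divide_less_eq)
    ultimately show ?thesis
      using subspace_scale[OF subspace a(1)] by blast
  qed
  moreover have "M \<ge> 0"
    using \<open>r > 0\<close> by (simp add: M_def)
  ultimately show ?thesis by blast
qed

lemma bounded_series_expansion:
  assumes approx: "\<forall>z\<in>S. \<forall>e>0. \<exists>a\<in>S. norm (f a) \<le> M * norm z \<and> norm (z - a) < e"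
    and "M \<ge> 0" and x: "x \<in> S" "x \<noteq> 0"
  shows "\<exists>a. (\<forall>j. a j \<in> S) \<and> (\<forall>j. norm (f (a j)) \<le> M * norm x * (1/2)^j)
    \<and> (\<lambda>N. \<Sum>j<N. a j) \<longlonglongrightarrow> x"
proof -
  define g where "g z e = (SOME a. a \<in> S \<and> norm (f a) \<le> M * norm z \<and> norm (z - a) < e)" for z e
  have g: "g z e \<in> S \<and> norm (f (g z e)) \<le> M * norm z \<and> norm (z - g z e) < e"
    if "z \<in> S" "e > 0" for z e
    unfolding g_def by (rule someI_ex) (use approx that in blast)
  define eps where "eps j = norm x * (1/2)^Suc j" for j :: nat
  have eps: "eps j > 0" for j
    using x(2) by (simp add: eps_def)
  \<comment> \<open>\<open>rest j\<close> is the part of \<open>x\<close> not yet approximated after \<open>j\<close> steps\<close>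
  define rest where "rest = rec_nat x (\<lambda>j z. z - g z (eps j))"
  define a where "a j = g (rest j) (eps j)" for j
  have rest_0: "rest 0 = x" and rest_Suc: "rest (Suc j) = rest j - a j" for j
    by (simp_all add: rest_def a_def)
  have rest: "rest j \<in> S \<and> norm (rest j) \<le> norm x * (1/2)^j" for j
  proof (induction j)
    case 0
    then show ?case using x by (simp add: rest_0)
  next
    case (Suc j)
    then have "a j \<in> S" "norm (rest j - a j) < eps j"
      using g[of "rest j" "eps j"] eps by (simp_all add: a_def)
    then show ?case
      using Suc subspace_diff[OF subspace] by (simp add: rest_Suc eps_def)
  qed
  have a_S: "a j \<in> S" for j
    using g rest eps by (simp add: a_def)
  have "norm (f (a j)) \<le> M * norm (rest j)" for j
    using g[of "rest j" "eps j"] rest eps by (simp add: a_def)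
  then have a_bound: "norm (f (a j)) \<le> M * norm x * (1/2)^j" for j
    using rest[of j] mult_left_mono[OF _ \<open>M \<ge> 0\<close>] by (smt (verit) mult.assoc)
  have "(\<Sum>j<N. a j) = x - rest N" for N
    by (induction N) (simp_all add: rest_0 rest_Suc)
  moreover have "rest \<longlonglongrightarrow> 0"
  proof (rule Lim_null_comparison)
    show "\<forall>\<^sub>F j in sequentially. norm (rest j) \<le> norm x * (1/2)^j"
      using rest by simp
    show "(\<lambda>j. norm x * (1/2::real)^j) \<longlonglongrightarrow> 0"
      by (intro tendsto_mult_right_zero LIMSEQ_power_zero) simp
  qed
  then have "(\<lambda>N. x - rest N) \<longlonglongrightarrow> x - 0"
    by (intro tendsto_diff tendsto_const)
  ultimately have "(\<lambda>N. \<Sum>j<N. a j) \<longlonglongrightarrow> x"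
    by simp
  then show ?thesis
    using a_S a_bound by blast
qed

lemma closed_graph_imp_bounded:
  assumes graph: "closed {(x, f x) | x. x \<in> S}"
  shows "\<exists>C. \<forall>x\<in>S. norm (f x) \<le> C * norm x"
proof -
  obtain M where "M \<ge> 0"
    and approx: "\<forall>z\<in>S. \<forall>e>0. \<exists>a\<in>S. norm (f a) \<le> M * norm z \<and> norm (z - a) < e"
    using approx_with_bounded_image by blast
  have "norm (f x) \<le> 2 * M * norm x" if x: "x \<in> S" "x \<noteq> 0" for x
  proof -
    obtain a where a: "\<And>j. a j \<in> S" "\<And>j. norm (f (a j)) \<le> M * norm x * (1/2)^j"
      and sum_a: "(\<lambda>N. \<Sum>j<N. a j) \<longlonglongrightarrow> x"
      using bounded_series_expansion[OF approx \<open>M \<ge> 0\<close> x] by metis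
    have geom: "summable (\<lambda>j. M * norm x * (1/2::real)^j)"
      by (intro summable_mult summable_geometric) simp
    then have summable: "summable (\<lambda>j. norm (f (a j)))"
      by (rule summable_comparison_test'[where N=0]) (simp add: a(2))
    have "(\<lambda>N. f (\<Sum>j<N. a j)) \<longlonglongrightarrow> (\<Sum>j. f (a j))"
      using summable_LIMSEQ[OF summable_norm_cancel[OF summable]] by (simp add: sum a(1))
    moreover have "(\<Sum>j<N. a j) \<in> S" for N
      using a(1) by (rule subspace_sum[OF subspace])
    ultimately have "(x, \<Sum>j. f (a j)) \<in> {(x, f x) | x. x \<in> S}"
      by (intro closed_sequentially[OF graph _ tendsto_Pair[OF sum_a]]) auto
    then have "f x = (\<Sum>j. f (a j))"
      by auto
    also have "norm \<dots> \<le> (\<Sum>j. norm (f (a j)))"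
      by (rule summable_norm[OF summable])
    also have "\<dots> \<le> (\<Sum>j. M * norm x * (1/2)^j)"
      by (rule suminf_le[OF a(2) summable geom])
    also have "\<dots> = 2 * M * norm x"
      using suminf_geometric[of "1/2::real"] by (simp add: suminf_mult)
    finally show ?thesis .
  qed
  then show ?thesis
    by (metis mult_zero_right norm_zero order_refl zero)
qed

end

section \<open>Closed operators with \<open>D(T) \<subseteq> D(T\<^sup>*)\<close> and \<open>T D(T) \<subseteq> D(T)\<close>\<close>

lemma linear_op_subspace: "linear_op D T \<Longrightarrow> subspace D"
  by (auto simp: linear_op_def csubspace_def subspace_def scaleR_scaleC)

lemma linear_op_add: "linear_op D T \<Longrightarrow> x \<in> D \<Longrightarrow> y \<in> D \<Longrightarrow> T (x + y) = T x + T y"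
  by (simp add: linear_op_def)

lemma linear_op_scaleR: "linear_op D T \<Longrightarrow> x \<in> D \<Longrightarrow> T (r *\<^sub>R x) = r *\<^sub>R T x"
  by (simp add: linear_op_def scaleR_scaleC)

lemma linear_op_zero: "linear_op D T \<Longrightarrow> T 0 = 0"
  using linear_op_scaleR[of D T 0 0] subspace_0[OF linear_op_subspace, of D T] by simp

lemma linear_op_diff: "linear_op D T \<Longrightarrow> x \<in> D \<Longrightarrow> y \<in> D \<Longrightarrow> T (x - y) = T x - T y"
  using linear_op_add[of D T x "(-1) *\<^sub>R y"] linear_op_scaleR[of D T y "-1"]
    subspace_scale[OF linear_op_subspace, of D T y "-1"]
  by simp

lemma subspace_graph: "linear_op D T \<Longrightarrow> subspace {(x, T x) | x. x \<in> D}"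
  using linear_op_zero[of D T] subspace_0[OF linear_op_subspace]
    subspace_add[OF linear_op_subspace] subspace_scale[OF linear_op_subspace]
  unfolding subspace_def
  by (fastforce simp: zero_prod_def linear_op_add linear_op_scaleR)

lemma norm_adj_comp_le_graph_norm:
  fixes D :: "'a::chilbert_space set"
  assumes lin: "linear_op D T" and dense: "densely_defined D" and closed: "closed_op D T"
    and adj: "D \<subseteq> adj_dom D T" and image: "T ` D \<subseteq> D"
  shows "\<exists>C\<ge>0. \<forall>x\<in>D. norm (adj D T (T x)) \<le> C * (norm x + norm (T x))"
proof -
  define G where "G = {(x, T x) | x. x \<in> D}"
  define F where "F p = adj D T (snd p)" for p :: "'a \<times> 'a"
  have snd_G: "snd p \<in> adj_dom D T" if p: "p \<in> G" for p
  proof -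
    obtain x where "x \<in> D" "p = (x, T x)"
      using p by (auto simp: G_def)
    then show ?thesis
      using adj image by auto
  qed
  interpret F: linear_on_closed_subspace G F
  proof
    show "closed G"
      using closed by (simp add: G_def closed_op_def)
    show "subspace G"
      using subspace_graph[OF lin] by (simp add: G_def)
    show "F (p + q) = F p + F q" if "p \<in> G" "q \<in> G" for p q
      using adj_add[OF dense snd_G[OF that(1)] snd_G[OF that(2)]] by (simp add: F_def)
    show "F (r *\<^sub>R p) = r *\<^sub>R F p" if "p \<in> G" for r p
      using adj_scaleR[OF dense snd_G[OF that]] by (simp add: F_def)
  qed
  have "closed {(p, F p) | p. p \<in> G}"
  proof (subst closed_sequential_limits, intro allI impI, elim conjE)
    fix s :: "nat \<Rightarrow> ('a \<times> 'a) \<times> 'a" and l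
    assume s: "\<forall>j. s j \<in> {(p, F p) | p. p \<in> G}" and lim: "s \<longlonglongrightarrow> l"
    have fst_s: "fst (s j) \<in> G" and snd_s: "snd (s j) = F (fst (s j))" for j
      using s[rule_format, of j] by auto
    have "fst l \<in> G"
      by (rule closed_sequentially[OF F.closed _ tendsto_fst[OF lim]]) (use fst_s in blast)
    moreover have "F (fst l) = snd l"
      unfolding F_def
    proof (rule adj_eq_lim[OF dense])
      show "snd (fst (s j)) \<in> adj_dom D T" for j
        using snd_G[OF fst_s] .
      show "snd (fst l) \<in> adj_dom D T"
        using snd_G[OF \<open>fst l \<in> G\<close>] .
      show "(\<lambda>j. snd (fst (s j))) \<longlonglongrightarrow> snd (fst l)"
        by (rule tendsto_snd[OF tendsto_fst[OF lim]])
      show "(\<lambda>j. adj D T (snd (fst (s j)))) \<longlonglongrightarrow> snd l"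
        using tendsto_snd[OF lim] by (simp add: snd_s F_def)
    qed
    ultimately have "l = (fst l, F (fst l)) \<and> fst l \<in> G"
      by simp
    then show "l \<in> {(p, F p) | p. p \<in> G}"
      by blast
  qed
  then obtain C where C: "\<forall>p\<in>G. norm (F p) \<le> C * norm p"
    using F.closed_graph_imp_bounded by fast
  have "norm (adj D T (T x)) \<le> max C 0 * (norm x + norm (T x))" if "x \<in> D" for x
  proof -
    have "norm (adj D T (T x)) \<le> C * norm (x, T x)"
      using C that by (auto simp: G_def F_def)
    also have "\<dots> \<le> max C 0 * norm (x, T x)"
      by (simp add: mult_right_mono)
    also have "\<dots> \<le> max C 0 * (norm x + norm (T x))"
      by (simp add: mult_left_mono norm_Pair_le)
    finally show ?thesis .
  qed
  then show ?thesis
    by (intro exI[of _ "max C 0"]) auto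
qed

lemma le_mult_if_square_le:
  fixes a b c :: real
  assumes "0 \<le> b" "0 \<le> c" "a\<^sup>2 \<le> c * b * (b + a)"
  shows "a \<le> (c + 1) * b"
proof (rule ccontr)
  assume "\<not> ?thesis"
  moreover have "0 \<le> (c + 1) * b"
    using assms(1,2) by simp
  ultimately have a: "(c + 1) * b < a" "0 < a"
    by linarith+
  have "b * (c * b) \<le> b * a"
    using a(1) assms(1) by (intro mult_left_mono) (auto simp: distrib_right)
  moreover have "(c + 1) * b * a < a * a"
    using a by (intro mult_strict_right_mono)
  ultimately have "c * b * (b + a) < a\<^sup>2"
    by (simp add: power2_eq_square algebra_simps)
  then show False
    using assms(3) by simp
qed

theorem closed_op_bounded_if_image_subset_dom:
  fixes D :: "'a::chilbert_space set"
  assumes "linear_op D T" and dense: "densely_defined D" and "closed_op D T"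
    and adj: "D \<subseteq> adj_dom D T" and image: "T ` D \<subseteq> D"
  shows "\<exists>K. \<forall>x\<in>D. norm (T x) \<le> K * norm x"
proof -
  obtain C where "C \<ge> 0" and C: "\<forall>x\<in>D. norm (adj D T (T x)) \<le> C * (norm x + norm (T x))"
    using norm_adj_comp_le_graph_norm[OF assms] by blast
  have "norm (T x) \<le> (C + 1) * norm x" if x: "x \<in> D" for x
  proof (rule le_mult_if_square_le[OF norm_ge_zero \<open>C \<ge> 0\<close>])
    have "T x \<in> adj_dom D T"
      using adj image x by auto
    then have "(norm (T x))\<^sup>2 = Re (cinner x (adj D T (T x)))"
      using cinner_adj[OF dense _ x] by (simp add: power2_norm_eq_cinner)
    also have "\<dots> \<le> norm x * norm (adj D T (T x))"
      using abs_Re_cinner_le_norm abs_le_D1 by blast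
    also have "\<dots> \<le> norm x * (C * (norm x + norm (T x)))"
      using C x by (simp add: mult_left_mono)
    finally show "(norm (T x))\<^sup>2 \<le> C * norm x * (norm x + norm (T x))"
      by (simp add: mult.assoc mult.left_commute)
  qed
  then show ?thesis by blast
qed

lemma closed_op_bounded_imp_closed_dom:
  fixes D :: "'a::chilbert_space set"
  assumes lin: "linear_op D T" and "closed_op D T" and bound: "\<forall>x\<in>D. norm (T x) \<le> K * norm x"
  shows "closed D"
proof (subst closed_sequential_limits, intro allI impI, elim conjE)
  fix xs l assume xs: "\<forall>j. xs j \<in> D" and lim: "xs \<longlonglongrightarrow> l"
  have "lipschitz_on (max K 0) D T"
  proof (rule lipschitz_onI)
    fix x y assume "x \<in> D" "y \<in> D"
    then have "x - y \<in> D"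
      using subspace_diff[OF linear_op_subspace[OF lin]] by blast
    then have "norm (T (x - y)) \<le> K * norm (x - y)"
      using bound by blast
    then have "dist (T x) (T y) \<le> K * dist x y"
      using linear_op_diff[OF lin \<open>x \<in> D\<close> \<open>y \<in> D\<close>] by (simp add: dist_norm)
    also have "\<dots> \<le> max K 0 * dist x y"
      by (simp add: mult_right_mono)
    finally show "dist (T x) (T y) \<le> max K 0 * dist x y" .
  qed simp
  then have "Cauchy (\<lambda>j. T (xs j))"
    by (rule uniformly_continuous_on_Cauchy[OF lipschitz_on_uniformly_continuous
          LIMSEQ_imp_Cauchy[OF lim]]) (use xs in blast)
  then have "convergent (\<lambda>j. T (xs j))"
    by (simp add: Cauchy_convergent_iff)
  then obtain y where y: "(\<lambda>j. T (xs j)) \<longlonglongrightarrow> y"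
    unfolding convergent_def ..
  have "(l, y) \<in> {(x, T x) | x. x \<in> D}"
    by (rule closed_sequentially[OF assms(2)[unfolded closed_op_def] _ tendsto_Pair[OF lim y]])
      (use xs in blast)
  then show "l \<in> D" by auto
qed

section \<open>Nilpotent operators\<close>

lemma decseq_pow_dom: "decseq (pow_dom D T)"
proof (rule decseq_SucI)
  show "pow_dom D T (Suc n) \<subseteq> pow_dom D T n" for n
    by (induction n) auto
qed

lemma nilpotent_op_image_subset:
  assumes "linear_op D T" and "nilpotent_op D T"
  shows "T ` D \<subseteq> D"
proof
  obtain n where n: "pow_dom D T n = D" "\<forall>x\<in>D. (T ^^ n) x = 0"
    using assms(2) by (auto simp: nilpotent_op_def)
  fix y assume "y \<in> T ` D"
  then obtain x where x: "x \<in> D" "y = T x" by blast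
  consider "n = 0" | "n = 1" | "2 \<le> n" by linarith
  then show "y \<in> D"
  proof cases
    case 1
    then show ?thesis using n(1) by simp
  next
    case 2
    then show ?thesis using n(2) x subspace_0[OF linear_op_subspace[OF assms(1)]] by simp
  next
    case 3
    then have "D \<subseteq> pow_dom D T 2"
      using decseqD[OF decseq_pow_dom] n(1) by metis
    then have "x \<in> pow_dom D T 2"
      using x(1) ..
    then show ?thesis using x by (simp add: numeral_2_eq_2)
  qed
qed

lemma symmetric_op_imp_hyponormal_op: "symmetric_op D T \<Longrightarrow> hyponormal_op D T"
  by (auto simp: symmetric_op_def hyponormal_op_def)

lemma hyponormal_op_eq_0_if_square_eq_0:
  assumes hyp: "hyponormal_op D T" and "w \<in> D" "T w \<in> D" "T (T w) = 0"
  shows "T w = 0"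
proof -
  have "norm (adj D T (T w)) \<le> norm (T (T w))"
    using hyp \<open>T w \<in> D\<close> by (auto simp: hyponormal_op_def)
  then have "adj D T (T w) = 0"
    using \<open>T (T w) = 0\<close> by simp
  moreover have "cinner (T w) (T w) = cinner w (adj D T (T w))"
    using hyp assms(2,3) by (intro cinner_adj) (auto simp: hyponormal_op_def)
  ultimately show ?thesis
    by (simp add: cinner_self_eq_zero)
qed

lemma hyponormal_op_nilpotent_eq_0:
  assumes lin: "linear_op D T" and hyp: "hyponormal_op D T" and nil: "nilpotent_op D T"
    and "x \<in> D"
  shows "T x = 0"
proof -
  obtain n where n: "\<forall>x\<in>D. (T ^^ n) x = 0"
    using nil by (auto simp: nilpotent_op_def)
  have image: "T ` D \<subseteq> D"
    using nilpotent_op_image_subset[OF lin nil] .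
  have iter: "(T ^^ k) x \<in> D" if "x \<in> D" for k x
  proof (induction k)
    case 0
    then show ?case using that by simp
  next
    case (Suc k)
    then show ?case using image by auto
  qed
  have lower: "\<forall>x\<in>D. (T ^^ Suc k) x = 0" if "\<forall>x\<in>D. (T ^^ Suc (Suc k)) x = 0" for k
  proof
    fix x assume "x \<in> D"
    then have "(T ^^ k) x \<in> D" "T ((T ^^ k) x) \<in> D" "T (T ((T ^^ k) x)) = 0"
      using that iter image by auto
    then show "(T ^^ Suc k) x = 0"
      using hyponormal_op_eq_0_if_square_eq_0[OF hyp] by simp
  qed
  have descend: "\<forall>x\<in>D. T x = 0" if "\<forall>x\<in>D. (T ^^ Suc m) x = 0" for m
    using that
  proof (induction m)
    case 0
    then show ?case by simp
  next
    case (Suc m)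
    then show ?case using lower by blast
  qed
  show ?thesis
  proof (cases n)
    case 0
    then have "x = 0"
      using n \<open>x \<in> D\<close> by simp
    then show ?thesis
      using linear_op_zero[OF lin] by simp
  next
    case (Suc m)
    then show ?thesis
      using descend n \<open>x \<in> D\<close> by blast
  qed
qed

theorem proposition2p3:
  fixes D :: "'a::chilbert_space set" and T :: "'a \<Rightarrow> 'a"
  assumes "linear_op D T"
    and "densely_defined D"
    and "closed_op D T"
    and "D \<subseteq> adj_dom D T"
    and "nilpotent_op D T"
  shows "D = UNIV \<and> bounded_linear T
     \<and> ((symmetric_op D T \<or> hyponormal_op D T) \<longrightarrow> (\<forall>x. T x = 0))"
proof -
  have "T ` D \<subseteq> D"
    using nilpotent_op_image_subset[OF assms(1,5)] .
  then obtain K where K: "\<forall>x\<in>D. norm (T x) \<le> K * norm x"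
    using closed_op_bounded_if_image_subset_dom[OF assms(1-4)] by blast
  then have "closed D"
    using closed_op_bounded_imp_closed_dom[OF assms(1,3)] by blast
  then have D: "D = UNIV"
    using assms(2) by (simp add: densely_defined_def)
  have "bounded_linear T"
    using assms(1) K unfolding D
    by (intro bounded_linear_intro[where K=K]) (auto simp: linear_op_add linear_op_scaleR mult.commute)
  moreover have "T x = 0" if "symmetric_op D T \<or> hyponormal_op D T" for x
    using hyponormal_op_nilpotent_eq_0[OF assms(1) _ assms(5)] symmetric_op_imp_hyponormal_op that D
    by blast
  ultimately show ?thesis
    using D by blast
qed

end
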